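(* In the model and protocol $\mathrm{OciorABA}^*$ described in the context, with $n\ge 3t+1$ and every honest node receiving an input message, if any honest node outputs a value $w$, then every honest node eventually outputs $w$.
   Context: Model: there are $n$ nodes $\mathrm{Node}_1,\dots,\mathrm{Node}_n$ in an asynchronous network (every message sent between honest nodes is eventually delivered, with arbitrary adversarial delay). An adaptive adversary may corrupt (make dishonest/Byzantine) at most $t$ nodes in total; $\mathcal F\subseteq[1:n]$ denotes the set of dishonest nodes; $n\ge 3t+1$. Primitives used as black boxes: (RBC) For each $j\in[1:n]$ there is a reliable broadcast instance $\mathrm{RBC}_j$ with leader $\mathrm{Node}_j$, satisfying: Consistency (if two honest nodes output $w',w''$ then $w'=w''$); Validity (if the leader is honest and inputs $w$, every honest node eventually outputs $w$); Totality (if one honest node outputs a value, every honest node eventually outputs a value). (ABBA) For each $j\in[1:n]$ there is a binary Byzantine agreement instance $\mathrm{ABBA}_j$ (inputs and outputs in $\{0,1\}$), satisfying: Termination (if all honest nodes provide inputs, every honest node eventually outputs a value and terminates); Consistency (if an honest node outputs $b$, every honest node eventually outputs $b$); Validity (if all honest nodes input the same $b$, every honest node eventually outputs $b$). (Erasure code) An $(n,t+1)$ erasure code over an alphabet $\Sigma$: an encoder $\mathrm{Enc}$ mapping a message $w$ to $(\mathrm{Enc}_1(w),\dots,\mathrm{Enc}_n(w))\in\Sigma^n$ and a decoder $\mathrm{Dec}$ such that for every set $K\subseteq[1:n]$ with $|K|=t+1$, $\mathrm{Dec}(\{\mathrm{Enc}_j(w)\}_{j\in K})=w$. Protocol $\mathrm{OciorABA}^*$,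 code for an honest $\mathrm{Node}_i$ with input message $w_i$: (1) Compute $(y^{(i)}_1,\dots,y^{(i)}_n)=\mathrm{Enc}(w_i)$ and input $y^{(i)}_i$ into $\mathrm{RBC}_i$ (as leader). (2) Upon delivery of a value $y^{(j)}_j$ from $\mathrm{RBC}_j$ (after step (1) has been executed), if $\mathrm{Node}_i$ has not yet given an input to $\mathrm{ABBA}_j$: set $a_i[j]=1$ if $y^{(j)}_j=y^{(i)}_j$ and $a_i[j]=0$ otherwise, and input $a_i[j]$ into $\mathrm{ABBA}_j$. (3) Upon obtaining outputs from $n-t$ of the instances $\mathrm{ABBA}_1,\dots,\mathrm{ABBA}_n$, input $0$ into every $\mathrm{ABBA}_j$ to which $\mathrm{Node}_i$ has not yet given an input. (4) Upon obtaining outputs from all $n$ ABBA instances: let $S=\{j:\mathrm{ABBA}_j\text{ output }1\}$. If $|S|<t+1$, output a default value $\bot$ and terminate. Otherwise let $K$ be the set of the $t+1$ smallest elements of $S$, wait for delivery of $y^{(j)}_j$ from $\mathrm{RBC}_j$ for all $j\in K$, output $\mathrm{Dec}(\{y^{(j)}_j\}_{j\in K})$ and terminate. *)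

theory Defs
  imports Main
begin

text \<open>
Views of an execution (per honest node i, instance j, time tau):
  deliv i j tau : value delivered to node i by RBC_j up to time tau (None = nothing yet)
  ain   i j tau : input given by node i to ABBA_j up to time tau
  aout  i j tau : output of ABBA_j at node i up to time tau
  outp  i tau   : output of node i up to time tau; Some None is the default value bot,
                  Some (Some w) is the message w.
F is the set of (ever) dishonest nodes; winput i is the input of node i.
\<close>

definition stable :: "(nat \<Rightarrow> 'a option) \<Rightarrow> bool" where
  "stable f \<longleftrightarrow> (\<forall>\<tau> \<tau>' v. f \<tau> = Some v \<and> \<tau> \<le> \<tau>' \<longrightarrow> f \<tau>' = Some v)"

definition smallest :: "nat \<Rightarrow> nat set \<Rightarrow> nat set" where
  "smallest k S = {j \<in> S. card {l \<in> S. l < j} < k}"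

definition erasure_code ::
  "nat \<Rightarrow> nat \<Rightarrow> ('m \<Rightarrow> nat \<Rightarrow> 'c) \<Rightarrow> ((nat \<Rightarrow> 'c option) \<Rightarrow> 'm) \<Rightarrow> bool" where
  "erasure_code n t Enc Dec \<longleftrightarrow>
     (\<forall>w K. K \<subseteq> {1..n} \<and> card K = t + 1 \<longrightarrow>
        Dec (\<lambda>j. if j \<in> K then Some (Enc w j) else None) = w)"

definition honest :: "nat \<Rightarrow> nat set \<Rightarrow> nat set" where
  "honest n F = {1..n} - F"

text \<open>RBC guarantees (leader j honest inputs Enc_j(w_j) in step (1)).\<close>
definition rbc_props ::
  "nat \<Rightarrow> nat set \<Rightarrow> ('m \<Rightarrow> nat \<Rightarrow> 'c) \<Rightarrow> (nat \<Rightarrow> 'm)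
   \<Rightarrow> (nat \<Rightarrow> nat \<Rightarrow> nat \<Rightarrow> 'c option) \<Rightarrow> bool" where
  "rbc_props n F Enc winput deliv \<longleftrightarrow>
     (\<forall>j \<in> {1..n}.
        (\<forall>i \<in> honest n F. \<forall>i' \<in> honest n F. \<forall>\<tau> \<tau>' v v'.
            deliv i j \<tau> = Some v \<and> deliv i' j \<tau>' = Some v' \<longrightarrow> v = v')
      \<and> (j \<in> honest n F \<longrightarrow>
            (\<forall>i \<in> honest n F. \<exists>\<tau>. deliv i j \<tau> = Some (Enc (winput j) j)))
      \<and> ((\<exists>i \<in> honest n F. \<exists>\<tau>. deliv i j \<tau> \<noteq> None) \<longrightarrow>
            (\<forall>i \<in> honest n F. \<exists>\<tau>. deliv i j \<tau> \<noteq> None)))"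

definition abba_props ::
  "nat \<Rightarrow> nat set \<Rightarrow> (nat \<Rightarrow> nat \<Rightarrow> nat \<Rightarrow> bool option)
   \<Rightarrow> (nat \<Rightarrow> nat \<Rightarrow> nat \<Rightarrow> bool option) \<Rightarrow> bool" where
  "abba_props n F ain aout \<longleftrightarrow>
     (\<forall>j \<in> {1..n}.
        ((\<forall>i \<in> honest n F. \<exists>\<tau>. ain i j \<tau> \<noteq> None) \<longrightarrow>
            (\<forall>i \<in> honest n F. \<exists>\<tau>. aout i j \<tau> \<noteq> None))
      \<and> (\<forall>i \<in> honest n F. \<forall>\<tau> b. aout i j \<tau> = Some b \<longrightarrow>
            (\<forall>i' \<in> honest n F. \<exists>\<tau>'. aout i' j \<tau>' = Some b))
      \<and> (\<forall>b. (\<forall>i \<in> honest n F. \<exists>\<tau>. ain i j \<tau> = Some b) \<longrightarrow>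
            (\<forall>i \<in> honest n F. \<exists>\<tau>. aout i j \<tau> = Some b)))"

definition nouts :: "nat \<Rightarrow> (nat \<Rightarrow> nat \<Rightarrow> nat \<Rightarrow> bool option) \<Rightarrow> nat \<Rightarrow> nat \<Rightarrow> nat" where
  "nouts n aout i \<tau> = card {k \<in> {1..n}. aout i k \<tau> \<noteq> None}"

text \<open>Step (4): the value node i outputs, given its view at time tau
  (meaningful when all ABBA outputs and the needed RBC deliveries are present).\<close>
definition out_value ::
  "nat \<Rightarrow> nat \<Rightarrow> ((nat \<Rightarrow> 'c option) \<Rightarrow> 'm)
   \<Rightarrow> (nat \<Rightarrow> nat \<Rightarrow> nat \<Rightarrow> 'c option) \<Rightarrow> (nat \<Rightarrow> nat \<Rightarrow> nat \<Rightarrow> bool option)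
   \<Rightarrow> nat \<Rightarrow> nat \<Rightarrow> 'm option" where
  "out_value n t Dec deliv aout i \<tau> =
     (let S = {j \<in> {1..n}. aout i j \<tau> = Some True} in
      if card S < t + 1 then None
      else Some (Dec (\<lambda>j. if j \<in> smallest (t + 1) S then deliv i j \<tau> else None)))"

text \<open>Steps (1)-(4) executed by every honest node (local computation is instantaneous).\<close>
definition protocol_rules ::
  "nat \<Rightarrow> nat \<Rightarrow> nat set \<Rightarrow> ('m \<Rightarrow> nat \<Rightarrow> 'c) \<Rightarrow> ((nat \<Rightarrow> 'c option) \<Rightarrow> 'm)
   \<Rightarrow> (nat \<Rightarrow> 'm) \<Rightarrow> (nat \<Rightarrow> nat \<Rightarrow> nat \<Rightarrow> 'c option)
   \<Rightarrow> (nat \<Rightarrow> nat \<Rightarrow> nat \<Rightarrow> bool option) \<Rightarrow> (nat \<Rightarrow> nat \<Rightarrow> nat \<Rightarrow> bool option)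
   \<Rightarrow> (nat \<Rightarrow> nat \<Rightarrow> 'm option option) \<Rightarrow> bool" where
  "protocol_rules n t F Enc Dec winput deliv ain aout outp \<longleftrightarrow>
     (\<forall>i \<in> honest n F.
        stable (outp i)
      \<and> (\<forall>j \<in> {1..n}. stable (deliv i j) \<and> stable (ain i j) \<and> stable (aout i j))
      \<comment> \<open>step (2), justification of an input (or step (3))\<close>
      \<and> (\<forall>j \<in> {1..n}. \<forall>\<tau> b. ain i j \<tau> = Some b \<longrightarrow>
            ((\<exists>v. deliv i j \<tau> = Some v \<and> b = (v = Enc (winput i) j))
             \<or> (b = False \<and> nouts n aout i \<tau> \<ge> n - t)))
      \<comment> \<open>step (2), trigger upon delivery\<close>
      \<and> (\<forall>j \<in> {1..n}. \<forall>\<tau>. deliv i j \<tau> \<noteq> None \<longrightarrow> ain i j \<tau> \<noteq> None)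
      \<comment> \<open>step (3), trigger upon n-t ABBA outputs\<close>
      \<and> (\<forall>\<tau>. nouts n aout i \<tau> \<ge> n - t \<longrightarrow> (\<forall>j \<in> {1..n}. ain i j \<tau> \<noteq> None))
      \<comment> \<open>step (4), safety of the output\<close>
      \<and> (\<forall>\<tau> ov. outp i \<tau> = Some ov \<longrightarrow>
            (\<forall>j \<in> {1..n}. aout i j \<tau> \<noteq> None)
          \<and> (let S = {j \<in> {1..n}. aout i j \<tau> = Some True} in
               card S \<ge> t + 1 \<longrightarrow> (\<forall>j \<in> smallest (t + 1) S. deliv i j \<tau> \<noteq> None))
          \<and> ov = out_value n t Dec deliv aout i \<tau>)
      \<comment> \<open>step (4), output as soon as its conditions hold\<close>
      \<and> (\<forall>\<tau>. (\<forall>j \<in> {1..n}. aout i j \<tau> \<noteq> None)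
             \<and> (let S = {j \<in> {1..n}. aout i j \<tau> = Some True} in
                  card S \<ge> t + 1 \<longrightarrow> (\<forall>j \<in> smallest (t + 1) S. deliv i j \<tau> \<noteq> None))
             \<longrightarrow> outp i \<tau> \<noteq> None))"

definition ociorABA_exec ::
  "nat \<Rightarrow> nat \<Rightarrow> nat set \<Rightarrow> ('m \<Rightarrow> nat \<Rightarrow> 'c) \<Rightarrow> ((nat \<Rightarrow> 'c option) \<Rightarrow> 'm)
   \<Rightarrow> (nat \<Rightarrow> 'm) \<Rightarrow> (nat \<Rightarrow> nat \<Rightarrow> nat \<Rightarrow> 'c option)
   \<Rightarrow> (nat \<Rightarrow> nat \<Rightarrow> nat \<Rightarrow> bool option) \<Rightarrow> (nat \<Rightarrow> nat \<Rightarrow> nat \<Rightarrow> bool option)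
   \<Rightarrow> (nat \<Rightarrow> nat \<Rightarrow> 'm option option) \<Rightarrow> bool" where
  "ociorABA_exec n t F Enc Dec winput deliv ain aout outp \<longleftrightarrow>
     rbc_props n F Enc winput deliv
   \<and> abba_props n F ain aout
   \<and> protocol_rules n t F Enc Dec winput deliv ain aout outp"

end

theory Submission
  imports Defs
begin

text \<open>
Once an honest node i outputs, it holds outputs of all n ABBA instances and
the RBC values of the t+1 smallest instances that output 1. By ABBA consistency every other
honest node i' eventually obtains the same ABBA outputs, and by RBC totality and consistency
it eventually obtains the same RBC values. All views are stable, so from some common time on
i' sees exactly what i saw when it output; step (4) then forces i' to output, and the output,
being computed from that view, is the same.
\<close>

lemma stable_eventually:
  assumes "stable f" "f \<tau> = Some v"
  shows "eventually (\<lambda>\<tau>'. f \<tau>' = Some v) sequentially"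
  using assms unfolding stable_def by (blast intro: eventually_sequentiallyI[of \<tau>])

lemma rbc_props_delivered_everywhere:
  assumes "rbc_props n F Enc winput deliv" and "j \<in> {1..n}"
    and "i \<in> honest n F" and "i' \<in> honest n F" and "deliv i j \<tau> = Some v"
  obtains \<tau>' where "deliv i' j \<tau>' = Some v"
proof -
  obtain \<tau>' where "deliv i' j \<tau>' \<noteq> None"
    using assms unfolding rbc_props_def by blast
  then obtain v' where v': "deliv i' j \<tau>' = Some v'"
    by blast
  moreover have "v = v'"
    using assms v' unfolding rbc_props_def by blast
  ultimately show thesis
    using that by simp
qed

lemma abba_props_output_everywhere:
  assumes "abba_props n F ain aout" and "j \<in> {1..n}"
    and "i \<in> honest n F" and "i' \<in> honest n F" and "aout i j \<tau> = Some b"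
  obtains \<tau>' where "aout i' j \<tau>' = Some b"
  using assms unfolding abba_props_def by blast

lemma smallest_subset: "smallest k S \<subseteq> S"
  unfolding smallest_def by auto

definition ready_to_output ::
  "nat \<Rightarrow> nat \<Rightarrow> (nat \<Rightarrow> nat \<Rightarrow> nat \<Rightarrow> 'c option) \<Rightarrow> (nat \<Rightarrow> nat \<Rightarrow> nat \<Rightarrow> bool option)
   \<Rightarrow> nat \<Rightarrow> nat \<Rightarrow> bool" where
  "ready_to_output n t deliv aout i \<tau> \<longleftrightarrow>
     (\<forall>j \<in> {1..n}. aout i j \<tau> \<noteq> None)
   \<and> (let S = {j \<in> {1..n}. aout i j \<tau> = Some True} in
        card S \<ge> t + 1 \<longrightarrow> (\<forall>j \<in> smallest (t + 1) S. deliv i j \<tau> \<noteq> None))"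

lemma protocol_rules_output:
  assumes "protocol_rules n t F Enc Dec winput deliv ain aout outp"
    and "i \<in> honest n F" and "outp i \<tau> = Some ov"
  shows "ready_to_output n t deliv aout i \<tau> \<and> ov = out_value n t Dec deliv aout i \<tau>"
  using assms unfolding protocol_rules_def ready_to_output_def by blast

lemma protocol_rules_output_when_ready:
  assumes "protocol_rules n t F Enc Dec winput deliv ain aout outp"
    and "i \<in> honest n F" and "ready_to_output n t deliv aout i \<tau>"
  obtains ov where "outp i \<tau> = Some ov"
  using assms unfolding protocol_rules_def ready_to_output_def by blast

definition view_covers ::
  "nat \<Rightarrow> (nat \<Rightarrow> nat \<Rightarrow> nat \<Rightarrow> 'c option) \<Rightarrow> (nat \<Rightarrow> nat \<Rightarrow> nat \<Rightarrow> bool option)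
   \<Rightarrow> nat \<Rightarrow> nat \<Rightarrow> nat \<Rightarrow> nat \<Rightarrow> bool" where
  "view_covers n deliv aout i' \<tau>' i \<tau> \<longleftrightarrow>
     (\<forall>j \<in> {1..n}. aout i' j \<tau>' = aout i j \<tau>
        \<and> (deliv i j \<tau> \<noteq> None \<longrightarrow> deliv i' j \<tau>' = deliv i j \<tau>))"

lemma view_covers_ones:
  assumes "view_covers n deliv aout i' \<tau>' i \<tau>"
  shows "{j \<in> {1..n}. aout i' j \<tau>' = Some True} = {j \<in> {1..n}. aout i j \<tau> = Some True}"
  using assms unfolding view_covers_def by auto

lemma view_covers_deliv:
  assumes "view_covers n deliv aout i' \<tau>' i \<tau>" and "ready_to_output n t deliv aout i \<tau>"
    and "card {j \<in> {1..n}. aout i j \<tau> = Some True} \<ge> t + 1"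
    and "j \<in> smallest (t + 1) {j \<in> {1..n}. aout i j \<tau> = Some True}"
  shows "deliv i' j \<tau>' = deliv i j \<tau>" and "deliv i j \<tau> \<noteq> None"
proof -
  have "j \<in> {1..n}"
    using assms(4) smallest_subset by blast
  moreover show "deliv i j \<tau> \<noteq> None"
    using assms(2-4) unfolding ready_to_output_def Let_def by blast
  ultimately show "deliv i' j \<tau>' = deliv i j \<tau>"
    using assms(1) unfolding view_covers_def by blast
qed

lemma ready_to_output_covered:
  assumes "view_covers n deliv aout i' \<tau>' i \<tau>" and "ready_to_output n t deliv aout i \<tau>"
  shows "ready_to_output n t deliv aout i' \<tau>'"
proof -
  have "\<forall>j \<in> {1..n}. aout i' j \<tau>' \<noteq> None"
    using assms unfolding view_covers_def ready_to_output_def by simp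
  then show ?thesis
    using view_covers_deliv[OF assms]
    unfolding ready_to_output_def Let_def view_covers_ones[OF assms(1)] by simp
qed

lemma out_value_covered:
  assumes "view_covers n deliv aout i' \<tau>' i \<tau>" and "ready_to_output n t deliv aout i \<tau>"
  shows "out_value n t Dec deliv aout i' \<tau>' = out_value n t Dec deliv aout i \<tau>"
proof -
  define S where "S = {j \<in> {1..n}. aout i j \<tau> = Some True}"
  have "card S \<ge> t + 1 \<Longrightarrow>
      (\<lambda>j. if j \<in> smallest (t + 1) S then deliv i' j \<tau>' else None)
    = (\<lambda>j. if j \<in> smallest (t + 1) S then deliv i j \<tau> else None)"
    using view_covers_deliv(1)[OF assms] unfolding S_def by auto
  then show ?thesis
    unfolding out_value_def Let_def view_covers_ones[OF assms(1)] S_def[symmetric] by simp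
qed

lemma eventually_view_covers:
  assumes "rbc_props n F Enc winput deliv" and "abba_props n F ain aout"
    and "protocol_rules n t F Enc Dec winput deliv ain aout outp"
    and "i \<in> honest n F" and "i' \<in> honest n F"
    and "\<forall>j \<in> {1..n}. aout i j \<tau> \<noteq> None"
  shows "eventually (\<lambda>\<tau>'. view_covers n deliv aout i' \<tau>' i \<tau>) sequentially"
  unfolding view_covers_def
proof (intro eventually_ball_finite ballI finite_atLeastAtMost eventually_conj)
  fix j assume j: "j \<in> {1..n}"
  have stab: "stable (aout i' j)" "stable (deliv i' j)"
    using assms(3,5) j unfolding protocol_rules_def by blast+
  obtain b where b: "aout i j \<tau> = Some b"
    using assms(6) j by blast
  then obtain \<tau>\<^sub>1 where "aout i' j \<tau>\<^sub>1 = Some b"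
    using abba_props_output_everywhere[OF assms(2) j assms(4,5)] by blast
  then show "eventually (\<lambda>\<tau>'. aout i' j \<tau>' = aout i j \<tau>) sequentially"
    using stable_eventually[OF stab(1)] b by simp
  show "eventually (\<lambda>\<tau>'. deliv i j \<tau> \<noteq> None \<longrightarrow> deliv i' j \<tau>' = deliv i j \<tau>) sequentially"
  proof (cases "deliv i j \<tau>")
    case (Some v)
    then obtain \<tau>\<^sub>2 where "deliv i' j \<tau>\<^sub>2 = Some v"
      using rbc_props_delivered_everywhere[OF assms(1) j assms(4,5)] by blast
    then show ?thesis
      using stable_eventually[OF stab(2)] Some by simp
  qed simp
qed

theorem theorem3:
  fixes n t :: nat and F :: "nat set"
    and Enc :: "'m \<Rightarrow> nat \<Rightarrow> 'c" and Dec :: "(nat \<Rightarrow> 'c option) \<Rightarrow> 'm"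
    and winput :: "nat \<Rightarrow> 'm"
    and deliv :: "nat \<Rightarrow> nat \<Rightarrow> nat \<Rightarrow> 'c option"
    and ain aout :: "nat \<Rightarrow> nat \<Rightarrow> nat \<Rightarrow> bool option"
    and outp :: "nat \<Rightarrow> nat \<Rightarrow> 'm option option"
  assumes "n \<ge> 3 * t + 1"
    and "F \<subseteq> {1..n}" and "card F \<le> t"
    and "erasure_code n t Enc Dec"
    and "ociorABA_exec n t F Enc Dec winput deliv ain aout outp"
    and "i \<in> honest n F" and "outp i \<tau> = Some w"
  shows "\<forall>i' \<in> honest n F. \<exists>\<tau>'. outp i' \<tau>' = Some w"
proof
  fix i' assume i': "i' \<in> honest n F"
  have R: "rbc_props n F Enc winput deliv" and A: "abba_props n F ain aout"
    and P: "protocol_rules n t F Enc Dec winput deliv ain aout outp"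
    using assms(5) unfolding ociorABA_exec_def by auto
  have ready: "ready_to_output n t deliv aout i \<tau>"
    and w: "w = out_value n t Dec deliv aout i \<tau>"
    using protocol_rules_output[OF P assms(6,7)] by auto
  have "eventually (\<lambda>\<tau>'. view_covers n deliv aout i' \<tau>' i \<tau>) sequentially"
    using eventually_view_covers[OF R A P assms(6) i'] ready
    unfolding ready_to_output_def by blast
  then obtain T where cover: "view_covers n deliv aout i' T i \<tau>"
    unfolding eventually_sequentially by blast
  obtain ov where ov: "outp i' T = Some ov"
    using protocol_rules_output_when_ready[OF P i' ready_to_output_covered[OF cover ready]] .
  have "ov = out_value n t Dec deliv aout i' T"
    using protocol_rules_output[OF P i' ov] by blast
  also have "\<dots> = w"
    using out_value_covered[OF cover ready] w by simp
  finally show "\<exists>\<tau>'. outp i' \<tau>' = Some w"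
    using ov by blast
qed

end
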